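(* Let $m_1,m_2$ be positive real numbers with $m_1\leq 1.8m_2$. If $G\in\mathcal{G}_{m_1,m_2}$, then the disjoint union $G\cup K_t$ belongs to $\mathcal{G}_{m_1,m_2}$ for every integer $1\leq t\leq\lfloor 2m_1\rfloor$.
   Context: All graphs are finite and simple. For a graph $H$, $|H|$ denotes its number of vertices and $\lVert H\rVert$ its number of edges. For real numbers $m_1,m_2$, $\mathcal{G}_{m_1,m_2}$ is the class of graphs $G$ such that $\lVert H\rVert\leq m_1|H|$ for every subgraph $H$ of $G$, and $\lVert H\rVert\leq m_2|H|$ for every bipartite subgraph $H$ of $G$. $G\cup K_t$ denotes the vertex-disjoint union of $G$ and the complete graph on $t$ vertices. *)

theory Defs
  imports Complex_Main
begin

type_synonym 'a sgraph = "'a set \<times> 'a set set"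

definition wf_graph :: "'a sgraph \<Rightarrow> bool" where
  "wf_graph G \<longleftrightarrow> finite (fst G) \<and>
     (\<forall>e\<in>snd G. \<exists>u v. u \<noteq> v \<and> e = {u, v} \<and> u \<in> fst G \<and> v \<in> fst G)"

definition subgraph :: "'a sgraph \<Rightarrow> 'a sgraph \<Rightarrow> bool" where
  "subgraph H G \<longleftrightarrow> wf_graph H \<and> fst H \<subseteq> fst G \<and> snd H \<subseteq> snd G"

definition bipartite :: "'a sgraph \<Rightarrow> bool" where
  "bipartite H \<longleftrightarrow> (\<exists>A. \<forall>e\<in>snd H. \<exists>u v. e = {u, v} \<and> u \<in> A \<and> v \<notin> A)"

definition graph_class :: "real \<Rightarrow> real \<Rightarrow> 'a sgraph \<Rightarrow> bool" where
  "graph_class m1 m2 G \<longleftrightarrow> wf_graph G \<and>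
     (\<forall>H. subgraph H G \<longrightarrow> real (card (snd H)) \<le> m1 * real (card (fst H))) \<and>
     (\<forall>H. subgraph H G \<and> bipartite H \<longrightarrow> real (card (snd H)) \<le> m2 * real (card (fst H)))"

definition union_K :: "'a sgraph \<Rightarrow> nat \<Rightarrow> ('a + nat) sgraph" where
  "union_K G t = (Inl ` fst G \<union> Inr ` {0..<t},
     (\<lambda>e. Inl ` e) ` snd G \<union> {{Inr i, Inr j} | i j. i < t \<and> j < t \<and> i \<noteq> j})"

end

theory Submission
  imports Defs
begin

text \<open>A subgraph H of G \<union> K_t splits into its part in G and its part in K_t, and both
  vertex and edge counts add up. The part in G satisfies both density bounds by assumption.
  The part in K_t has s \<le> t \<le> 2 m1 vertices, hence at most s (s - 1) / 2 \<le> m1 s edges,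
  and if it is bipartite at most s^2 / 4 \<le> m1 s / 2 \<le> 0.9 m2 s edges.\<close>

lemma wf_graph_edgeE:
  assumes "wf_graph H" and "e \<in> snd H"
  obtains u v where "u \<noteq> v" "e = {u, v}" "u \<in> fst H" "v \<in> fst H"
  using assms unfolding wf_graph_def by blast

lemma wf_graph_edge_subset:
  assumes "wf_graph H" and "e \<in> snd H"
  shows "e \<subseteq> fst H"
  using assms by (elim wf_graph_edgeE) auto

lemma wf_graph_finite_edges:
  assumes "wf_graph H"
  shows "finite (snd H)"
proof (rule finite_subset)
  show "snd H \<subseteq> Pow (fst H)"
    using wf_graph_edge_subset[OF assms] by blast
  show "finite (Pow (fst H))"
    using assms unfolding wf_graph_def by simp
qed

lemma card_edges_le_choose_two:
  assumes "wf_graph H"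
  shows "card (snd H) \<le> card (fst H) choose 2"
proof -
  have fin: "finite (fst H)"
    using assms unfolding wf_graph_def by simp
  have "snd H \<subseteq> {B. B \<subseteq> fst H \<and> card B = 2}"
    using assms by (auto elim!: wf_graph_edgeE)
  moreover have "finite {B. B \<subseteq> fst H \<and> card B = 2}"
    using fin by simp
  ultimately have "card (snd H) \<le> card {B. B \<subseteq> fst H \<and> card B = 2}"
    by (rule card_mono[rotated])
  also have "\<dots> = card (fst H) choose 2"
    using n_subsets[OF fin] by simp
  finally show ?thesis .
qed

lemma four_mult_le_square_add: "4 * (a * b) \<le> (a + b)\<^sup>2" for a b :: nat
proof -
  have "(4::int) * (int a * int b) \<le> (int a + int b)\<^sup>2"
    using sum_squares_ge_zero[of "int a - int b" 0] by (simp add: power2_eq_square algebra_simps)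
  then have "int (4 * (a * b)) \<le> int ((a + b)\<^sup>2)"
    by simp
  then show ?thesis
    by (simp only: of_nat_le_iff)
qed

lemma bipartite_card_edges_le:
  assumes "wf_graph H" and "bipartite H"
  shows "4 * card (snd H) \<le> (card (fst H))\<^sup>2"
proof -
  obtain A where A: "\<forall>e\<in>snd H. \<exists>u v. e = {u, v} \<and> u \<in> A \<and> v \<notin> A"
    using assms(2) unfolding bipartite_def by blast
  define X where "X = fst H \<inter> A"
  define Y where "Y = fst H - A"
  have fin: "finite X" "finite Y"
    using assms(1) unfolding wf_graph_def X_def Y_def by simp_all
  have "snd H \<subseteq> (\<lambda>(u, v). {u, v}) ` (X \<times> Y)"
  proof
    fix e assume e: "e \<in> snd H"
    then obtain u v where uv: "e = {u, v}" "u \<in> A" "v \<notin> A"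
      using A by blast
    moreover have "u \<in> fst H" "v \<in> fst H"
      using wf_graph_edge_subset[OF assms(1) e] uv(1) by auto
    ultimately have "(u, v) \<in> X \<times> Y"
      unfolding X_def Y_def by blast
    then show "e \<in> (\<lambda>(u, v). {u, v}) ` (X \<times> Y)"
      by (rule rev_image_eqI) (simp add: uv(1))
  qed
  then have "card (snd H) \<le> card ((\<lambda>(u, v). {u, v}) ` (X \<times> Y))"
    using fin by (intro card_mono) auto
  also have "\<dots> \<le> card X * card Y"
    using card_image_le[of "X \<times> Y"] fin by (simp add: card_cartesian_product)
  finally have "4 * card (snd H) \<le> 4 * (card X * card Y)"
    by simp
  also have "\<dots> \<le> (card X + card Y)\<^sup>2"
    by (rule four_mult_le_square_add)
  also have "card X + card Y = card (fst H)"
  proof -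
    have "fst H = X \<union> Y" "X \<inter> Y = {}"
      unfolding X_def Y_def by blast+
    then show ?thesis
      using fin card_Un_disjoint by metis
  qed
  finally show ?thesis .
qed

lemma card_edges_le_if_card_verts_le:
  assumes "wf_graph H" and "real (card (fst H)) \<le> 2 * m + 1"
  shows "real (card (snd H)) \<le> m * real (card (fst H))"
proof -
  define s where "s = card (fst H)"
  have "2 * card (snd H) \<le> s * (s - 1)"
    using card_edges_le_choose_two[OF assms(1)] unfolding s_def choose_two by linarith
  then have "real (2 * card (snd H)) \<le> real (s * (s - 1))"
    by (rule of_nat_mono)
  also have "\<dots> = real s * (real s - 1)"
    by (cases s) (simp_all add: algebra_simps)
  also have "\<dots> \<le> real s * (2 * m)"
    using assms(2) unfolding s_def by (intro mult_left_mono) auto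
  finally show ?thesis
    unfolding s_def by (simp add: mult.commute)
qed

lemma bipartite_card_edges_le_if_card_verts_le:
  assumes "wf_graph H" and "bipartite H" and "real (card (fst H)) \<le> 4 * m"
  shows "real (card (snd H)) \<le> m * real (card (fst H))"
proof -
  have "4 * real (card (snd H)) \<le> real (card (fst H)) * real (card (fst H))"
    using of_nat_mono[where 'a=real, OF bipartite_card_edges_le[OF assms(1,2)]]
    by (simp add: power2_eq_square)
  also have "\<dots> \<le> real (card (fst H)) * (4 * m)"
    using assms(3) by (intro mult_left_mono) auto
  finally show ?thesis
    by (simp add: mult.commute)
qed

definition vimage_graph :: "('a \<Rightarrow> 'b) \<Rightarrow> 'b sgraph \<Rightarrow> 'a sgraph" where
  "vimage_graph f H = (f -` fst H, {e. f ` e \<in> snd H})"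

lemma fst_vimage_graph [simp]: "fst (vimage_graph f H) = f -` fst H"
  and snd_vimage_graph [simp]: "snd (vimage_graph f H) = {e. f ` e \<in> snd H}"
  by (simp_all add: vimage_graph_def)

lemma inj_image_eq_doubletonE:
  assumes "inj f" and "f ` e = {u, v}"
  obtains x y where "e = {x, y}" "u = f x" "v = f y"
proof -
  have "u \<in> f ` e" "v \<in> f ` e"
    using assms(2) by simp_all
  then obtain x y where xy: "x \<in> e" "u = f x" "y \<in> e" "v = f y"
    by blast
  have "f ` e = f ` {x, y}"
    using assms(2) xy(2,4) by simp
  then have "e = {x, y}"
    by (simp only: inj_image_eq_iff[OF assms(1)])
  then show ?thesis
    using xy(2,4) by (rule that)
qed

lemma wf_graph_vimage_graph:
  assumes "inj f" and "wf_graph H"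
  shows "wf_graph (vimage_graph f H)"
  unfolding wf_graph_def
proof (intro conjI ballI)
  show "finite (fst (vimage_graph f H))"
    using assms finite_vimageI unfolding wf_graph_def by auto
  fix e assume "e \<in> snd (vimage_graph f H)"
  then have "f ` e \<in> snd H"
    by simp
  then obtain u v where uv: "u \<noteq> v" "f ` e = {u, v}" "u \<in> fst H" "v \<in> fst H"
    by (rule wf_graph_edgeE[OF assms(2)])
  obtain x y where xy: "e = {x, y}" "u = f x" "v = f y"
    by (rule inj_image_eq_doubletonE[OF assms(1) uv(2)])
  show "\<exists>x y. x \<noteq> y \<and> e = {x, y} \<and>
      x \<in> fst (vimage_graph f H) \<and> y \<in> fst (vimage_graph f H)"
    by (intro exI[of _ x] exI[of _ y]) (use uv xy in auto)
qed

lemma bipartite_vimage_graph: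
  assumes "inj f" and "bipartite H"
  shows "bipartite (vimage_graph f H)"
proof -
  obtain A where A: "\<forall>e\<in>snd H. \<exists>u v. e = {u, v} \<and> u \<in> A \<and> v \<notin> A"
    using assms(2) unfolding bipartite_def by blast
  have "\<exists>x y. e = {x, y} \<and> x \<in> f -` A \<and> y \<notin> f -` A"
    if "e \<in> snd (vimage_graph f H)" for e
  proof -
    have "f ` e \<in> snd H"
      using that by simp
    then obtain u v where uv: "f ` e = {u, v}" "u \<in> A" "v \<notin> A"
      using bspec[OF A] by meson
    obtain x y where xy: "e = {x, y}" "u = f x" "v = f y"
      by (rule inj_image_eq_doubletonE[OF assms(1) uv(1)])
    show ?thesis
      by (intro exI[of _ x] exI[of _ y]) (use uv xy in simp)
  qed
  then show ?thesis
    unfolding bipartite_def by (intro exI[of _ "f -` A"]) simp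
qed

lemma card_vimage_Inl_Inr:
  assumes "finite A"
  shows "card A = card (Inl -` A) + card (Inr -` A)"
proof -
  have "A = Inl -` A <+> Inr -` A"
  proof (rule set_eqI)
    show "x \<in> A \<longleftrightarrow> x \<in> Inl -` A <+> Inr -` A" for x
      by (cases x) auto
  qed
  also have "card \<dots> = card (Inl -` A) + card (Inr -` A)"
    using assms by (intro card_Plus finite_vimageI) simp_all
  finally show ?thesis .
qed

lemma image_Inl_eq_image_Inr_iff: "Inl ` A = Inr ` B \<longleftrightarrow> A = {} \<and> B = {}"
  by blast

lemma card_edges_split_Inl_Inr:
  fixes H :: "('a + 'b) sgraph"
  assumes "wf_graph H" and "\<forall>e\<in>snd H. e \<subseteq> range Inl \<or> e \<subseteq> range Inr"
  shows "card (snd H) = card (snd (vimage_graph Inl H)) + card (snd (vimage_graph Inr H))"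
proof -
  define L :: "('a + 'b) set set" where "L = image Inl ` snd (vimage_graph Inl H)"
  define R :: "('a + 'b) set set" where "R = image Inr ` snd (vimage_graph Inr H)"
  have "e \<in> L \<union> R" if "e \<in> snd H" for e
    using bspec[OF assms(2) that]
  proof
    assume "e \<subseteq> range Inl"
    then have e: "Inl ` (Inl -` e) = e"
      by (simp add: Int_absorb2)
    then have "Inl -` e \<in> snd (vimage_graph Inl H)"
      using that by simp
    then show ?thesis
      unfolding L_def using e by blast
  next
    assume "e \<subseteq> range Inr"
    then have e: "Inr ` (Inr -` e) = e"
      by (simp add: Int_absorb2)
    then have "Inr -` e \<in> snd (vimage_graph Inr H)"
      using that by simp
    then show ?thesis
      unfolding R_def using e by blast
  qed
  moreover have "L \<union> R \<subseteq> snd H"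
    unfolding L_def R_def by auto
  ultimately have split: "snd H = L \<union> R"
    by blast
  have "L \<inter> R = {}"
  proof -
    have "e \<noteq> {}" if e: "e \<in> snd H" for e
    proof -
      obtain u v where "e = {u, v}"
        by (rule wf_graph_edgeE[OF assms(1) e])
      then show ?thesis
        by simp
    qed
    moreover have "e = {}" if "e \<in> L" "e \<in> R" for e
      using that unfolding L_def R_def by (auto simp: image_Inl_eq_image_Inr_iff)
    ultimately show ?thesis
      using split by blast
  qed
  moreover have "card L = card (snd (vimage_graph Inl H))" "card R = card (snd (vimage_graph Inr H))"
    unfolding L_def R_def
    by (rule card_image, rule inj_on_image, rule inj_on_subset[OF _ subset_UNIV], simp)+
  moreover have "finite L" "finite R"
    using wf_graph_finite_edges[OF assms(1)] split by simp_all
  ultimately show ?thesis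
    using split by (simp add: card_Un_disjoint)
qed

lemma wf_graph_union_K:
  assumes "wf_graph G"
  shows "wf_graph (union_K G t)"
  unfolding wf_graph_def
proof (intro conjI ballI)
  show "finite (fst (union_K G t))"
    using assms unfolding wf_graph_def union_K_def by simp
  fix e assume "e \<in> snd (union_K G t)"
  then consider (left) f where "f \<in> snd G" "e = Inl ` f"
    | (right) i j where "e = {Inr i, Inr j}" "i < t" "j < t" "i \<noteq> j"
    unfolding union_K_def by auto
  then show "\<exists>u v. u \<noteq> v \<and> e = {u, v} \<and>
      u \<in> fst (union_K G t) \<and> v \<in> fst (union_K G t)"
  proof cases
    case left
    obtain u v where uv: "u \<noteq> v" "f = {u, v}" "u \<in> fst G" "v \<in> fst G"
      by (rule wf_graph_edgeE[OF assms left(1)])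
    have "Inl u \<noteq> Inl v" "e = {Inl u, Inl v}"
      using uv(1,2) left(2) by simp_all
    moreover have "Inl u \<in> fst (union_K G t)" "Inl v \<in> fst (union_K G t)"
      using uv(3,4) unfolding union_K_def by simp_all
    ultimately show ?thesis
      by metis
  next
    case right
    then show ?thesis
      by (intro exI[of _ "Inr i"] exI[of _ "Inr j"]) (auto simp: union_K_def)
  qed
qed

lemma union_K_edge_sides:
  assumes "e \<in> snd (union_K G t)"
  shows "e \<subseteq> range Inl \<or> e \<subseteq> range Inr"
  using assms unfolding union_K_def by auto

lemma subgraph_union_K_vimage_Inl:
  assumes "wf_graph G" and "subgraph H (union_K G t)"
  shows "subgraph (vimage_graph Inl H) G"
  unfolding subgraph_def
proof (intro conjI)
  show "wf_graph (vimage_graph Inl H)"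
    using assms(2) unfolding subgraph_def by (simp add: wf_graph_vimage_graph)
  show "fst (vimage_graph Inl H) \<subseteq> fst G"
    using assms(2) unfolding subgraph_def union_K_def by auto
  show "snd (vimage_graph Inl H) \<subseteq> snd G"
  proof
    fix e assume "e \<in> snd (vimage_graph Inl H)"
    then have "Inl ` e \<in> snd (union_K G t)"
      using assms(2) unfolding subgraph_def by auto
    then show "e \<in> snd G"
      unfolding union_K_def by (auto simp: inj_image_eq_iff)
  qed
qed

lemma subgraph_union_K_vimage_Inr:
  assumes "subgraph H (union_K G t)"
  shows "wf_graph (vimage_graph Inr H)" and "card (fst (vimage_graph Inr H)) \<le> t"
proof -
  show "wf_graph (vimage_graph Inr H)"
    using assms unfolding subgraph_def by (simp add: wf_graph_vimage_graph)
  have "fst (vimage_graph Inr H) \<subseteq> {0..<t}"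
    using assms unfolding subgraph_def union_K_def by auto
  then show "card (fst (vimage_graph Inr H)) \<le> t"
    using card_mono[of "{0..<t}"] by simp
qed

lemma edge_bound_subgraph_union_K:
  assumes "subgraph H (union_K G t)"
    and "real (card (snd (vimage_graph Inl H))) \<le> m * real (card (fst (vimage_graph Inl H)))"
    and "real (card (snd (vimage_graph Inr H))) \<le> m * real (card (fst (vimage_graph Inr H)))"
  shows "real (card (snd H)) \<le> m * real (card (fst H))"
proof -
  have wf: "wf_graph H"
    using assms(1) unfolding subgraph_def by blast
  have "card (fst H) = card (fst (vimage_graph Inl H)) + card (fst (vimage_graph Inr H))"
    using wf card_vimage_Inl_Inr[of "fst H"] unfolding wf_graph_def by simp
  moreover have "card (snd H) = card (snd (vimage_graph Inl H)) + card (snd (vimage_graph Inr H))"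
  proof (rule card_edges_split_Inl_Inr[OF wf])
    show "\<forall>e\<in>snd H. e \<subseteq> range Inl \<or> e \<subseteq> range Inr"
      using assms(1) union_K_edge_sides unfolding subgraph_def by blast
  qed
  ultimately show ?thesis
    using assms(2,3) by (simp add: distrib_left)
qed

theorem lemma3:
  fixes m1 m2 :: real and G :: "'a sgraph" and t :: nat
  assumes "m1 > 0" and "m2 > 0" and "m1 \<le> 1.8 * m2"
    and "graph_class m1 m2 G"
    and "1 \<le> t" and "int t \<le> \<lfloor>2 * m1\<rfloor>"
  shows "graph_class m1 m2 (union_K G t)"
proof -
  have G: "wf_graph G"
    using assms(4) unfolding graph_class_def by blast
  have t: "real t \<le> 2 * m1"
    using assms(6) by linarith
  show ?thesis
    unfolding graph_class_def
  proof (intro conjI allI impI)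
    show "wf_graph (union_K G t)"
      using G by (rule wf_graph_union_K)
  next
    fix H assume H: "subgraph H (union_K G t)"
    show "real (card (snd H)) \<le> m1 * real (card (fst H))"
    proof (rule edge_bound_subgraph_union_K[OF H])
      show "real (card (snd (vimage_graph Inl H))) \<le> m1 * real (card (fst (vimage_graph Inl H)))"
        using assms(4) subgraph_union_K_vimage_Inl[OF G H] unfolding graph_class_def by blast
      show "real (card (snd (vimage_graph Inr H))) \<le> m1 * real (card (fst (vimage_graph Inr H)))"
        using subgraph_union_K_vimage_Inr[OF H] t by (intro card_edges_le_if_card_verts_le) auto
    qed
  next
    fix H assume H: "subgraph H (union_K G t) \<and> bipartite H"
    show "real (card (snd H)) \<le> m2 * real (card (fst H))"
    proof (rule edge_bound_subgraph_union_K[OF conjunct1[OF H]])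
      show "real (card (snd (vimage_graph Inl H))) \<le> m2 * real (card (fst (vimage_graph Inl H)))"
        using assms(4) H subgraph_union_K_vimage_Inl[OF G] bipartite_vimage_graph[OF inj_Inl]
        unfolding graph_class_def by blast
      show "real (card (snd (vimage_graph Inr H))) \<le> m2 * real (card (fst (vimage_graph Inr H)))"
        using subgraph_union_K_vimage_Inr[OF conjunct1[OF H]]
          bipartite_vimage_graph[OF inj_Inr conjunct2[OF H]] t assms(3)
        by (intro bipartite_card_edges_le_if_card_verts_le) auto
    qed
  qed
qed

end
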